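(* Let $G$ be a group and $P$ a subgroup of $\operatorname{Aut}(G)$. Then the partition hypergroup $\{G\}_P$ is realizable; more precisely, it is isomorphic to $\mathbf{H}(S)$ where $S=\{C_{[a]}:[a]\in\{G\}_P\}$, $C_{[a]}=\{(x,y)\in G\times G:xy^{-1}\in[a]\}$, is the partition association scheme on $G$.
   Context: For $a\in G$, $[a]=\{g(a):g\in P\}$ and $\{G\}_P$ is the set of these orbits. The partition hypergroup $\{G\}_P$ has hyperoperation $[x]*[y]=\{[z]: z=x'y' \text{ for some } x',y'\in G \text{ with } [x']=[x],[y']=[y]\}$. For a nonempty set $X$: $1_X$ is the diagonal, $p^*=\{(a,b):(b,a)\in p\}$, $xp=\{y:(x,y)\in p\}$. An association scheme on $X$ is a partition $S$ of $X\times X$ with $1_X\in S$, closed under $p\mapsto p^*$, such that for all $p,q,r\in S$ there is a cardinal $a_{pq}^r$ with $|yp\cap zq^*|=a_{pq}^r$ for all $y\in X$, $z\in yr$. $\mathbf{H}(S)$ is the hypergroup on $S$ with $p*q=\{r: a_{pq}^r\ge1\}$ (complex multiplication), identity $1_X$, inverse $p^*$. A hypergroup is realizable if it is isomorphic to $\mathbf{H}(S)$ for some association scheme $S$. (A hypergroup is a nonempty set with a hyperoperation into nonempty subsets that is associative, has a unique identity, unique inverses $h^{-1}$ with $e\in(h^{-1}*h)\cap(h*h^{-1})$, and is reversible.) *)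

theory Defs
  imports "HOL-Algebra.Bij" "HOL-Library.Equipollence"
begin

definition is_hg_identity :: "'h set \<Rightarrow> ('h \<Rightarrow> 'h \<Rightarrow> 'h set) \<Rightarrow> 'h \<Rightarrow> bool" where
  "is_hg_identity H hop e \<longleftrightarrow> e \<in> H \<and> (\<forall>h\<in>H. hop e h = {h} \<and> hop h e = {h})"

definition hg_id :: "'h set \<Rightarrow> ('h \<Rightarrow> 'h \<Rightarrow> 'h set) \<Rightarrow> 'h" where
  "hg_id H hop = (THE e. is_hg_identity H hop e)"

definition is_hg_inverse :: "'h set \<Rightarrow> ('h \<Rightarrow> 'h \<Rightarrow> 'h set) \<Rightarrow> 'h \<Rightarrow> 'h \<Rightarrow> bool" where
  "is_hg_inverse H hop h h' \<longleftrightarrow> h' \<in> H \<and> hg_id H hop \<in> hop h' h \<inter> hop h h'"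

definition hg_inv :: "'h set \<Rightarrow> ('h \<Rightarrow> 'h \<Rightarrow> 'h set) \<Rightarrow> 'h \<Rightarrow> 'h" where
  "hg_inv H hop h = (THE h'. is_hg_inverse H hop h h')"

definition hypergroup :: "'h set \<Rightarrow> ('h \<Rightarrow> 'h \<Rightarrow> 'h set) \<Rightarrow> bool" where
  "hypergroup H hop \<longleftrightarrow>
     H \<noteq> {} \<and>
     (\<forall>x\<in>H. \<forall>y\<in>H. hop x y \<noteq> {} \<and> hop x y \<subseteq> H) \<and>
     (\<forall>x\<in>H. \<forall>y\<in>H. \<forall>z\<in>H. (\<Union>w\<in>hop x y. hop w z) = (\<Union>w\<in>hop y z. hop x w)) \<and>
     (\<exists>!e. is_hg_identity H hop e) \<and>
     (\<forall>h\<in>H. \<exists>!h'. is_hg_inverse H hop h h') \<and>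
     (\<forall>x\<in>H. \<forall>y\<in>H. \<forall>z\<in>H. z \<in> hop x y \<longrightarrow>
         y \<in> hop (hg_inv H hop x) z \<and> x \<in> hop z (hg_inv H hop y))"

definition hg_iso ::
  "'h set \<Rightarrow> ('h \<Rightarrow> 'h \<Rightarrow> 'h set) \<Rightarrow> 'k set \<Rightarrow> ('k \<Rightarrow> 'k \<Rightarrow> 'k set) \<Rightarrow> ('h \<Rightarrow> 'k) \<Rightarrow> bool" where
  "hg_iso H1 hop1 H2 hop2 f \<longleftrightarrow>
     bij_betw f H1 H2 \<and> (\<forall>x\<in>H1. \<forall>y\<in>H1. f ` hop1 x y = hop2 (f x) (f y))"

definition hg_isomorphic ::
  "'h set \<Rightarrow> ('h \<Rightarrow> 'h \<Rightarrow> 'h set) \<Rightarrow> 'k set \<Rightarrow> ('k \<Rightarrow> 'k \<Rightarrow> 'k set) \<Rightarrow> bool" where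
  "hg_isomorphic H1 hop1 H2 hop2 \<longleftrightarrow> (\<exists>f. hg_iso H1 hop1 H2 hop2 f)"

text \<open>xp = {y. (x,y) \<in> p}; the set  yp \<inter> zq* is {w. (y,w)\<in>p \<and> (w,z)\<in>q}.\<close>

definition row :: "'a \<Rightarrow> ('a \<times> 'a) set \<Rightarrow> 'a set" where
  "row x p = {y. (x, y) \<in> p}"

definition partition_of :: "'b set \<Rightarrow> 'b set set \<Rightarrow> bool" where
  "partition_of A S \<longleftrightarrow> (\<forall>s\<in>S. s \<noteq> {}) \<and> (\<forall>s\<in>S. \<forall>t\<in>S. s \<noteq> t \<longrightarrow> s \<inter> t = {}) \<and> \<Union>S = A"

text \<open>Cardinals are compared via equipollence, so that infinite schemes are allowed.\<close>

definition association_scheme :: "'a set \<Rightarrow> ('a \<times> 'a) set set \<Rightarrow> bool" where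
  "association_scheme X S \<longleftrightarrow>
     X \<noteq> {} \<and>
     partition_of (X \<times> X) S \<and>
     Id_on X \<in> S \<and>
     (\<forall>p\<in>S. converse p \<in> S) \<and>
     (\<forall>p\<in>S. \<forall>q\<in>S. \<forall>r\<in>S. \<exists>c::'a set. \<forall>y\<in>X. \<forall>z\<in>row y r.
         row y p \<inter> row z (converse q) \<approx> c)"

text \<open>Complex multiplication: r \<in> p*q iff a_pq^r \<ge> 1 (i.e. the common set is nonempty).\<close>

definition scheme_hop :: "'a set \<Rightarrow> ('a \<times> 'a) set set \<Rightarrow>
     ('a \<times> 'a) set \<Rightarrow> ('a \<times> 'a) set \<Rightarrow> ('a \<times> 'a) set set" where
  "scheme_hop X S p q = {r\<in>S. \<forall>y\<in>X. \<forall>z\<in>row y r. row y p \<inter> row z (converse q) \<noteq> {}}"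

definition aut_orbit :: "('a, 'c) monoid_scheme \<Rightarrow> ('a \<Rightarrow> 'a) set \<Rightarrow> 'a \<Rightarrow> 'a set" where
  "aut_orbit G P a = {g a | g. g \<in> P}"

definition orbits :: "('a, 'c) monoid_scheme \<Rightarrow> ('a \<Rightarrow> 'a) set \<Rightarrow> 'a set set" where
  "orbits G P = aut_orbit G P ` carrier G"

definition orbit_hop :: "('a, 'c) monoid_scheme \<Rightarrow> ('a \<Rightarrow> 'a) set \<Rightarrow> 'a set \<Rightarrow> 'a set \<Rightarrow> 'a set set" where
  "orbit_hop G P X Y = {aut_orbit G P (x' \<otimes>\<^bsub>G\<^esub> y') | x' y'.
      x' \<in> carrier G \<and> y' \<in> carrier G \<and> aut_orbit G P x' = X \<and> aut_orbit G P y' = Y}"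

definition orbit_rel :: "('a, 'c) monoid_scheme \<Rightarrow> ('a \<Rightarrow> 'a) set \<Rightarrow> 'a set \<Rightarrow> ('a \<times> 'a) set" where
  "orbit_rel G P A = {(x, y). x \<in> carrier G \<and> y \<in> carrier G \<and> x \<otimes>\<^bsub>G\<^esub> inv\<^bsub>G\<^esub> y \<in> A}"

definition partition_scheme :: "('a, 'c) monoid_scheme \<Rightarrow> ('a \<Rightarrow> 'a) set \<Rightarrow> ('a \<times> 'a) set set" where
  "partition_scheme G P = orbit_rel G P ` orbits G P"

end

theory Submission
  imports Defs "HOL-Algebra.Coset"
begin

text \<open>
  Since P acts on G by automorphisms, a product A <#> B of orbits is again a union of
  orbits, and [x] * [y] is exactly the set of orbits contained in [x] <#> [y]. Associativity,
  the identity [1], the inverse [a^-1] and reversibility thus reduce to the corresponding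
  facts about set multiplication in G.

  For the scheme, right translation by z identifies the set of w with (y, w) \<in> C[a] and
  (w, z) \<in> C[b] with the set of factorizations y z^-1 = x u, x \<in> [a], u \<in> [b]. An
  automorphism in P taking c to y z^-1 carries the factorizations of c onto those of y z^-1,
  so the intersection numbers only depend on [c], and they are nonzero iff c \<in> [a] <#> [b],
  i.e. iff [c] \<in> [a] * [b]. Hence [a] \<mapsto> C[a] is an isomorphism of hyperoperations, along
  which the hypergroup axioms are transported.
\<close>

lemma is_hg_identity_unique:
  "is_hg_identity H hop e \<Longrightarrow> is_hg_identity H hop e' \<Longrightarrow> e = e'"
  unfolding is_hg_identity_def by (metis singleton_inject)

lemma hg_id_eqI: "is_hg_identity H hop e \<Longrightarrow> hg_id H hop = e"
  unfolding hg_id_def by (blast intro: the_equality is_hg_identity_unique)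

lemma hg_inv_eqI:
  "is_hg_inverse H hop h h' \<Longrightarrow> (\<And>k. is_hg_inverse H hop h k \<Longrightarrow> k = h') \<Longrightarrow> hg_inv H hop h = h'"
  unfolding hg_inv_def by (rule the_equality)

lemma hypergroupD:
  assumes "hypergroup H hop"
  shows "H \<noteq> {}"
    and "\<And>x y. x \<in> H \<Longrightarrow> y \<in> H \<Longrightarrow> hop x y \<noteq> {}"
    and "\<And>x y. x \<in> H \<Longrightarrow> y \<in> H \<Longrightarrow> hop x y \<subseteq> H"
    and "\<And>x y z. x \<in> H \<Longrightarrow> y \<in> H \<Longrightarrow> z \<in> H \<Longrightarrow>
       (\<Union>w\<in>hop x y. hop w z) = (\<Union>w\<in>hop y z. hop x w)"
    and "\<exists>!e. is_hg_identity H hop e"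
    and "\<And>h. h \<in> H \<Longrightarrow> \<exists>!h'. is_hg_inverse H hop h h'"
    and "\<And>x y z. x \<in> H \<Longrightarrow> y \<in> H \<Longrightarrow> z \<in> H \<Longrightarrow> z \<in> hop x y \<Longrightarrow>
         y \<in> hop (hg_inv H hop x) z \<and> x \<in> hop z (hg_inv H hop y)"
  using assms unfolding hypergroup_def by simp_all

lemma is_hg_identity_hg_id: assumes "hypergroup H hop" shows "is_hg_identity H hop (hg_id H hop)"
proof -
  obtain e where "is_hg_identity H hop e" using hypergroupD(5)[OF assms] by blast
  then show ?thesis by (simp add: hg_id_eqI)
qed

lemma hg_inv_unique:
  assumes "hypergroup H hop" "h \<in> H" "is_hg_inverse H hop h k" shows "hg_inv H hop h = k"
  using hypergroupD(6)[OF assms(1,2)] assms(3) by (blast intro: hg_inv_eqI)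

lemma is_hg_inverse_hg_inv:
  assumes "hypergroup H hop" "h \<in> H" shows "is_hg_inverse H hop h (hg_inv H hop h)"
proof -
  obtain h' where "is_hg_inverse H hop h h'" using hypergroupD(6)[OF assms] by blast
  then show ?thesis using hg_inv_unique[OF assms] by simp
qed

lemma hg_inv_closed: assumes "hypergroup H hop" "h \<in> H" shows "hg_inv H hop h \<in> H"
  using is_hg_inverse_hg_inv[OF assms] by (simp add: is_hg_inverse_def)

lemma hg_isoD:
  assumes "hg_iso H1 hop1 H2 hop2 f"
  shows "inj_on f H1" "H2 = f ` H1"
    "\<And>x y. x \<in> H1 \<Longrightarrow> y \<in> H1 \<Longrightarrow> hop2 (f x) (f y) = f ` hop1 x y"
  using assms by (auto simp: hg_iso_def bij_betw_def)

lemma hg_iso_mem_iff: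
  assumes iso: "hg_iso H1 hop1 H2 hop2 f" and closed: "hop1 x y \<subseteq> H1"
    and "x \<in> H1" "y \<in> H1" "z \<in> H1"
  shows "f z \<in> hop2 (f x) (f y) \<longleftrightarrow> z \<in> hop1 x y"
  using inj_on_image_mem_iff[OF hg_isoD(1)[OF iso] assms(5) closed] hg_isoD(3)[OF iso assms(3,4)]
  by simp

lemma hg_iso_is_hg_identity:
  assumes hg: "hypergroup H1 hop1" and iso: "hg_iso H1 hop1 H2 hop2 f"
  shows "is_hg_identity H2 hop2 (f (hg_id H1 hop1))"
proof -
  let ?e = "hg_id H1 hop1"
  have e: "?e \<in> H1" "\<And>h. h \<in> H1 \<Longrightarrow> hop1 ?e h = {h} \<and> hop1 h ?e = {h}"
    using is_hg_identity_hg_id[OF hg] by (simp_all add: is_hg_identity_def)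
  then show ?thesis
    unfolding is_hg_identity_def hg_isoD(2)[OF iso] using hg_isoD(3)[OF iso] by auto
qed

lemma hg_iso_is_hg_inverse_iff:
  assumes hg: "hypergroup H1 hop1" and iso: "hg_iso H1 hop1 H2 hop2 f" and h: "h \<in> H1"
  shows "is_hg_inverse H2 hop2 (f h) k \<longleftrightarrow> k = f (hg_inv H1 hop1 h)"
proof -
  let ?e = "hg_id H1 hop1"
  have eH: "?e \<in> H1" using is_hg_identity_hg_id[OF hg] by (simp add: is_hg_identity_def)
  have id2: "hg_id H2 hop2 = f ?e" by (rule hg_id_eqI[OF hg_iso_is_hg_identity[OF hg iso]])
  have inv_iff: "is_hg_inverse H2 hop2 (f h) (f h') \<longleftrightarrow> is_hg_inverse H1 hop1 h h'" if "h' \<in> H1" for h'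
    unfolding is_hg_inverse_def id2
    using hg_iso_mem_iff[OF iso hypergroupD(3)[OF hg] _ _ eH] h that hg_isoD(2)[OF iso] by auto
  show ?thesis
  proof
    assume k: "is_hg_inverse H2 hop2 (f h) k"
    then obtain k' where "k' \<in> H1" "k = f k'" using hg_isoD(2)[OF iso] by (auto simp: is_hg_inverse_def)
    then show "k = f (hg_inv H1 hop1 h)"
      using k inv_iff hg_inv_unique[OF hg h] by simp
  qed (simp add: inv_iff hg_inv_closed[OF hg h] is_hg_inverse_hg_inv[OF hg h])
qed

lemma hypergroup_hg_iso:
  assumes hg: "hypergroup H1 hop1" and iso: "hg_iso H1 hop1 H2 hop2 f"
  shows "hypergroup H2 hop2"
proof -
  note H2 = hg_isoD(2)[OF iso] and hom = hg_isoD(3)[OF iso] and closed = hypergroupD(3)[OF hg]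
  have inv2: "hg_inv H2 hop2 (f h) = f (hg_inv H1 hop1 h)" if "h \<in> H1" for h
    using hg_iso_is_hg_inverse_iff[OF hg iso that] by (blast intro: hg_inv_eqI)
  have union_image: "(\<Union>w\<in>A. hop2 (f w) (f z)) = f ` (\<Union>w\<in>A. hop1 w z)"
    "(\<Union>w\<in>A. hop2 (f z) (f w)) = f ` (\<Union>w\<in>A. hop1 z w)" if "A \<subseteq> H1" "z \<in> H1" for A z
    using that by (simp_all add: image_UN hom subset_eq cong: SUP_cong_simp)
  show ?thesis
    unfolding hypergroup_def
  proof (intro conjI ballI impI)
    show "H2 \<noteq> {}" using hypergroupD(1)[OF hg] H2 by simp
  next
    fix x y assume "x \<in> H2" "y \<in> H2"
    then obtain a b where ab: "a \<in> H1" "b \<in> H1" and "x = f a" "y = f b" using H2 by blast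
    then show "hop2 x y \<noteq> {}" "hop2 x y \<subseteq> H2"
      using hom hypergroupD(2)[OF hg] closed[OF ab] H2 by auto
  next
    fix x y z assume "x \<in> H2" "y \<in> H2" "z \<in> H2"
    then obtain a b c where abc: "a \<in> H1" "b \<in> H1" "c \<in> H1" and "x = f a" "y = f b" "z = f c"
      using H2 by blast
    moreover have "(\<Union>w\<in>hop2 (f a) (f b). hop2 w (f c)) = (\<Union>w\<in>hop2 (f b) (f c). hop2 (f a) w)"
      using union_image[OF closed[OF abc(1,2)] abc(3)] union_image[OF closed[OF abc(2,3)] abc(1)]
        hypergroupD(4)[OF hg abc] hom[OF abc(1,2)] hom[OF abc(2,3)]
      by (simp add: image_UN)
    ultimately show "(\<Union>w\<in>hop2 x y. hop2 w z) = (\<Union>w\<in>hop2 y z. hop2 x w)" by simp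
  next
    show "\<exists>!e. is_hg_identity H2 hop2 e"
      using is_hg_identity_unique[OF _ hg_iso_is_hg_identity[OF hg iso]]
      by (intro ex1I[of _ "f (hg_id H1 hop1)"] hg_iso_is_hg_identity[OF hg iso])
  next
    fix x assume "x \<in> H2"
    then obtain h where "h \<in> H1" "x = f h" using H2 by blast
    then show "\<exists>!h'. is_hg_inverse H2 hop2 x h'" using hg_iso_is_hg_inverse_iff[OF hg iso] by simp
  next
    fix x y z assume "x \<in> H2" "y \<in> H2" "z \<in> H2" and z: "z \<in> hop2 x y"
    then obtain a b c where abc: "a \<in> H1" "b \<in> H1" "c \<in> H1" and xyz: "x = f a" "y = f b" "z = f c"
      using H2 by blast
    have "c \<in> hop1 a b" using z hg_iso_mem_iff[OF iso closed[OF abc(1,2)] abc] xyz by simp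
    then show "y \<in> hop2 (hg_inv H2 hop2 x) z" "x \<in> hop2 z (hg_inv H2 hop2 y)"
      using hypergroupD(7)[OF hg abc] abc xyz inv2 hg_inv_closed[OF hg] hom by auto
  qed
qed

context group
begin

definition right_factors :: "'a set \<Rightarrow> 'a set \<Rightarrow> 'a \<Rightarrow> 'a set" where
  "right_factors A B d = {u \<in> B. d \<otimes> inv u \<in> A}"

lemma mem_orbit_rel: "(x, y) \<in> orbit_rel G P A \<longleftrightarrow> x \<in> carrier G \<and> y \<in> carrier G \<and> x \<otimes> inv y \<in> A"
  by (simp add: orbit_rel_def)

lemma row_inter_converse_orbit_rel:
  assumes B: "B \<subseteq> carrier G" and y: "y \<in> carrier G" and z: "z \<in> carrier G"
  shows "row y (orbit_rel G P A) \<inter> row z (converse (orbit_rel G P B))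
    = (\<lambda>u. u \<otimes> z) ` right_factors A B (y \<otimes> inv z)"
proof (intro equalityI subsetI)
  fix w assume "w \<in> row y (orbit_rel G P A) \<inter> row z (converse (orbit_rel G P B))"
  then have w: "w \<in> carrier G" "y \<otimes> inv w \<in> A" "w \<otimes> inv z \<in> B"
    by (auto simp: row_def mem_orbit_rel)
  have "y \<otimes> inv z \<otimes> inv (w \<otimes> inv z) = y \<otimes> inv w" "w = w \<otimes> inv z \<otimes> z"
    using w(1) y z by (simp_all add: inv_mult_group m_assoc, simp add: m_assoc[symmetric])
  then show "w \<in> (\<lambda>u. u \<otimes> z) ` right_factors A B (y \<otimes> inv z)"
    using w unfolding right_factors_def by force
next
  fix w assume "w \<in> (\<lambda>u. u \<otimes> z) ` right_factors A B (y \<otimes> inv z)"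
  then obtain u where u: "u \<in> B" "y \<otimes> inv z \<otimes> inv u \<in> A" "w = u \<otimes> z"
    by (auto simp: right_factors_def)
  have uG: "u \<in> carrier G" using u(1) B by blast
  have "y \<otimes> inv w = y \<otimes> inv z \<otimes> inv u" "w \<otimes> inv z = u"
    using uG y z u(3) by (simp_all add: inv_mult_group m_assoc)
  then show "w \<in> row y (orbit_rel G P A) \<inter> row z (converse (orbit_rel G P B))"
    using u uG y z by (simp add: row_def mem_orbit_rel)
qed

lemma row_inter_converse_orbit_rel_eqpoll:
  assumes "B \<subseteq> carrier G" "y \<in> carrier G" "z \<in> carrier G"
  shows "row y (orbit_rel G P A) \<inter> row z (converse (orbit_rel G P B)) \<approx> right_factors A B (y \<otimes> inv z)"
proof -
  have "right_factors A B (y \<otimes> inv z) \<subseteq> carrier G" using assms(1) by (auto simp: right_factors_def)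
  then have "inj_on (\<lambda>u. u \<otimes> z) (right_factors A B (y \<otimes> inv z))"
    using assms(3) by (auto simp: inj_on_def right_cancel subset_iff)
  then show ?thesis
    unfolding row_inter_converse_orbit_rel[OF assms] by (rule inj_on_image_eqpoll_self)
qed

lemma right_factors_nonempty_iff:
  assumes "A \<subseteq> carrier G" "B \<subseteq> carrier G" "d \<in> carrier G"
  shows "right_factors A B d \<noteq> {} \<longleftrightarrow> d \<in> A <#> B"
proof
  assume "right_factors A B d \<noteq> {}"
  then obtain u where u: "u \<in> B" "d \<otimes> inv u \<in> A" by (auto simp: right_factors_def)
  moreover have "d = d \<otimes> inv u \<otimes> u" using u assms by (auto simp: m_assoc subsetD)
  ultimately show "d \<in> A <#> B" unfolding set_mult_def by blast
next
  assume "d \<in> A <#> B"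
  then obtain x u where xu: "x \<in> A" "u \<in> B" "d = x \<otimes> u" by (auto simp: set_mult_def)
  moreover have "x \<in> carrier G" "u \<in> carrier G" using xu assms by auto
  ultimately have "d \<otimes> inv u = x" by (simp add: m_assoc)
  then show "right_factors A B d \<noteq> {}" using xu by (auto simp: right_factors_def)
qed

end

locale aut_subgroup = group G for G (structure) +
  fixes P :: "('a \<Rightarrow> 'a) set"
  assumes subgroup_P: "subgroup P (AutoGroup G)"
begin

abbreviation orb :: "'a \<Rightarrow> 'a set" where "orb \<equiv> aut_orbit G P"

lemma P_auto: "g \<in> P \<Longrightarrow> g \<in> auto G"
  using subgroup.subset[OF subgroup_P] by (auto simp: AutoGroup_def)

lemma P_group_hom: "g \<in> P \<Longrightarrow> group_hom G G g"
  using P_auto group_axioms by (simp add: group_hom_def group_hom_axioms_def auto_def)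

lemma P_bij: "g \<in> P \<Longrightarrow> bij_betw g (carrier G) (carrier G)"
  using P_auto by (simp add: auto_def Bij_def)

lemma P_closed: "g \<in> P \<Longrightarrow> x \<in> carrier G \<Longrightarrow> g x \<in> carrier G"
  using P_bij bij_betwE by metis

lemma P_mult: "g \<in> P \<Longrightarrow> x \<in> carrier G \<Longrightarrow> y \<in> carrier G \<Longrightarrow> g (x \<otimes> y) = g x \<otimes> g y"
  by (simp add: group_hom.hom_mult[OF P_group_hom])

lemma P_inv: "g \<in> P \<Longrightarrow> x \<in> carrier G \<Longrightarrow> g (inv x) = inv (g x)"
  by (simp add: group_hom.hom_inv[OF P_group_hom])

lemma P_one: "g \<in> P \<Longrightarrow> g \<one> = \<one>"
  by (simp add: group_hom.hom_one[OF P_group_hom])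

lemma AutoGroup_mult_apply:
  "k \<in> P \<Longrightarrow> g \<in> P \<Longrightarrow> x \<in> carrier G \<Longrightarrow> (k \<otimes>\<^bsub>AutoGroup G\<^esub> g) x = k (g x)"
  using P_auto by (simp add: AutoGroup_def BijGroup_def auto_def compose_def)

lemma orbit_apply: assumes g: "g \<in> P" and x: "x \<in> carrier G" shows "orb (g x) = orb x"
proof -
  have "orb (g x) = (\<lambda>k. (k \<otimes>\<^bsub>AutoGroup G\<^esub> g) x) ` P"
    using AutoGroup_mult_apply[OF _ g x] by (auto simp: aut_orbit_def)
  also have "\<dots> = (\<lambda>k. k x) ` (P #>\<^bsub>AutoGroup G\<^esub> g)"
    by (auto simp: r_coset_def)
  also have "P #>\<^bsub>AutoGroup G\<^esub> g = P"
    by (rule subgroup.rcos_const[OF subgroup_P AutoGroup g])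
  finally show ?thesis by (auto simp: aut_orbit_def)
qed

lemma orbit_mem: "g \<in> P \<Longrightarrow> g a \<in> orb a"
  by (auto simp: aut_orbit_def)

lemma orbit_memE: assumes "b \<in> orb a" obtains g where "g \<in> P" "b = g a"
  using assms by (auto simp: aut_orbit_def)

lemma orbit_refl: assumes "a \<in> carrier G" shows "a \<in> orb a"
proof -
  have "\<one>\<^bsub>AutoGroup G\<^esub> a \<in> orb a" by (rule orbit_mem[OF subgroup.one_closed[OF subgroup_P]])
  then show ?thesis using assms by (simp add: AutoGroup_def BijGroup_def)
qed

lemma orbit_subset_carrier: "a \<in> carrier G \<Longrightarrow> orb a \<subseteq> carrier G"
  using P_closed by (auto elim: orbit_memE)

lemma orbit_eq_iff: assumes "a \<in> carrier G" "b \<in> carrier G" shows "orb a = orb b \<longleftrightarrow> b \<in> orb a"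
  using orbit_refl[OF assms(2)] orbit_apply[OF _ assms(1)] by (auto elim: orbit_memE)

lemma orbit_one: "orb \<one> = {\<one>}"
  using P_one orbit_refl[of \<one>] by (auto elim: orbit_memE)

lemma inv_mem_orbit_inv: "a \<in> carrier G \<Longrightarrow> b \<in> orb a \<Longrightarrow> inv b \<in> orb (inv a)"
  using P_inv orbit_mem by (auto elim!: orbit_memE)

definition aut_invariant :: "'a set \<Rightarrow> bool" where
  "aut_invariant S \<longleftrightarrow> S \<subseteq> carrier G \<and> (\<forall>g\<in>P. \<forall>s\<in>S. g s \<in> S)"

lemma aut_invariant_orbit: assumes a: "a \<in> carrier G" shows "aut_invariant (orb a)"
  unfolding aut_invariant_def
proof (intro conjI ballI)
  fix g s assume g: "g \<in> P" and s: "s \<in> orb a"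
  have sG: "s \<in> carrier G" using s orbit_subset_carrier[OF a] by blast
  have "orb a = orb (g s)" using orbit_apply[OF g sG] orbit_eq_iff[OF a sG] s by simp
  then show "g s \<in> orb a" using orbit_refl P_closed[OF g sG] by simp
qed (rule orbit_subset_carrier[OF a])

lemma aut_invariant_set_mult:
  assumes S: "aut_invariant S" and T: "aut_invariant T" shows "aut_invariant (S <#> T)"
  unfolding aut_invariant_def
proof (intro conjI ballI)
  show "S <#> T \<subseteq> carrier G" using S T set_mult_closed by (simp add: aut_invariant_def)
  fix g x assume g: "g \<in> P" and "x \<in> S <#> T"
  then obtain s t where st: "s \<in> S" "t \<in> T" "x = s \<otimes> t" by (auto simp: set_mult_def)
  moreover have "s \<in> carrier G" "t \<in> carrier G" using S T st by (auto simp: aut_invariant_def)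
  ultimately have "g x = g s \<otimes> g t" using P_mult[OF g] by simp
  moreover have "g s \<in> S" "g t \<in> T" using S T g st by (auto simp: aut_invariant_def)
  ultimately show "g x \<in> S <#> T" by (auto simp: set_mult_def)
qed

lemma orbit_subset_aut_invariant: "aut_invariant S \<Longrightarrow> s \<in> S \<Longrightarrow> orb s \<subseteq> S"
  by (auto simp: aut_invariant_def elim: orbit_memE)

lemma orbit_mem_image_iff:
  assumes "aut_invariant S" "c \<in> carrier G" shows "orb c \<in> orb ` S \<longleftrightarrow> c \<in> S"
proof
  assume "orb c \<in> orb ` S"
  then obtain s where "s \<in> S" "orb c = orb s" by blast
  then show "c \<in> S" using orbit_refl[OF assms(2)] orbit_subset_aut_invariant[OF assms(1)] by blast
qed blast

lemma UN_orbit_set_mult: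
  assumes S: "aut_invariant S"
  shows "(\<Union>s\<in>S. orb s <#> T) = S <#> T" "(\<Union>s\<in>S. T <#> orb s) = T <#> S"
proof -
  have sub: "orb s \<subseteq> S" and self_mem: "s \<in> orb s" if "s \<in> S" for s
    using orbit_subset_aut_invariant[OF S that] orbit_refl that S by (auto simp: aut_invariant_def)
  show "(\<Union>s\<in>S. orb s <#> T) = S <#> T"
  proof
    show "(\<Union>s\<in>S. orb s <#> T) \<subseteq> S <#> T" by (intro UN_least mono_set_mult sub subset_refl)
    show "S <#> T \<subseteq> (\<Union>s\<in>S. orb s <#> T)"
    proof
      fix x assume "x \<in> S <#> T"
      then obtain s t where st: "s \<in> S" "t \<in> T" "x = s \<otimes> t" by (auto simp: set_mult_def)
      then have "x \<in> orb s <#> T" using self_mem[OF st(1)] by (auto simp: set_mult_def)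
      then show "x \<in> (\<Union>s\<in>S. orb s <#> T)" using st(1) by blast
    qed
  qed
  show "(\<Union>s\<in>S. T <#> orb s) = T <#> S"
  proof
    show "(\<Union>s\<in>S. T <#> orb s) \<subseteq> T <#> S" by (intro UN_least mono_set_mult sub subset_refl)
    show "T <#> S \<subseteq> (\<Union>s\<in>S. T <#> orb s)"
    proof
      fix x assume "x \<in> T <#> S"
      then obtain s t where st: "s \<in> S" "t \<in> T" "x = t \<otimes> s" by (auto simp: set_mult_def)
      then have "x \<in> T <#> orb s" using self_mem[OF st(1)] by (auto simp: set_mult_def)
      then show "x \<in> (\<Union>s\<in>S. T <#> orb s)" using st(1) by blast
    qed
  qed
qed

lemma orbitsE: assumes "X \<in> orbits G P" obtains a where "a \<in> carrier G" "X = orb a"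
  using assms by (auto simp: orbits_def)

lemma orbit_image_orbit: assumes "a \<in> carrier G" shows "orb ` orb a = {orb a}"
proof -
  have "orb x = orb a" if "x \<in> orb a" for x
    using that orbit_eq_iff orbit_subset_carrier assms by blast
  then show ?thesis using orbit_refl[OF assms] by blast
qed

lemma orbit_hop_eq:
  assumes a: "a \<in> carrier G" and b: "b \<in> carrier G"
  shows "orbit_hop G P (orb a) (orb b) = orb ` (orb a <#> orb b)"
proof -
  have "orbit_hop G P (orb a) (orb b) = {orb (x \<otimes> y) | x y. x \<in> orb a \<and> y \<in> orb b}"
    unfolding orbit_hop_def
  proof (rule Collect_cong)
    fix u
    have "x \<in> carrier G \<and> orb x = orb c \<longleftrightarrow> x \<in> orb c" if "c \<in> carrier G" for c x
      using orbit_eq_iff[OF that, of x] orbit_subset_carrier[OF that] by auto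
    then show "(\<exists>x y. u = orb (x \<otimes> y) \<and> x \<in> carrier G \<and> y \<in> carrier G \<and> orb x = orb a \<and> orb y = orb b)
      \<longleftrightarrow> (\<exists>x y. u = orb (x \<otimes> y) \<and> x \<in> orb a \<and> y \<in> orb b)"
      using a b by metis
  qed
  also have "\<dots> = orb ` (orb a <#> orb b)" by (auto simp: set_mult_def)
  finally show ?thesis .
qed

lemma orbit_hop_subset_orbits:
  assumes "a \<in> carrier G" "b \<in> carrier G" shows "orbit_hop G P (orb a) (orb b) \<subseteq> orbits G P"
proof -
  have "orb a <#> orb b \<subseteq> carrier G" by (intro set_mult_closed orbit_subset_carrier assms)
  then show ?thesis unfolding orbit_hop_eq[OF assms] orbits_def by (rule image_mono)
qed

lemma UN_orbit_hop:
  assumes a: "a \<in> carrier G" and b: "b \<in> carrier G" and c: "c \<in> carrier G"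
  shows "(\<Union>W\<in>orbit_hop G P (orb a) (orb b). orbit_hop G P W (orb c)) = orb ` (orb a <#> orb b <#> orb c)"
    and "(\<Union>W\<in>orbit_hop G P (orb b) (orb c). orbit_hop G P (orb a) W) = orb ` (orb a <#> (orb b <#> orb c))"
proof -
  have inv: "aut_invariant (orb a <#> orb b)" "aut_invariant (orb b <#> orb c)"
    using aut_invariant_set_mult aut_invariant_orbit a b c by blast+
  then have carr: "orb a <#> orb b \<subseteq> carrier G" "orb b <#> orb c \<subseteq> carrier G"
    by (simp_all add: aut_invariant_def)
  have "(\<Union>W\<in>orbit_hop G P (orb a) (orb b). orbit_hop G P W (orb c))
      = (\<Union>s\<in>orb a <#> orb b. orb ` (orb s <#> orb c))"
    unfolding orbit_hop_eq[OF a b] image_image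
    using carr(1) by (intro SUP_cong refl orbit_hop_eq[OF _ c]) blast
  also have "\<dots> = orb ` (orb a <#> orb b <#> orb c)"
    by (simp add: image_UN[symmetric] UN_orbit_set_mult(1)[OF inv(1)])
  finally show "(\<Union>W\<in>orbit_hop G P (orb a) (orb b). orbit_hop G P W (orb c)) = orb ` (orb a <#> orb b <#> orb c)" .
  have "(\<Union>W\<in>orbit_hop G P (orb b) (orb c). orbit_hop G P (orb a) W)
      = (\<Union>s\<in>orb b <#> orb c. orb ` (orb a <#> orb s))"
    unfolding orbit_hop_eq[OF b c] image_image
    using carr(2) by (intro SUP_cong refl orbit_hop_eq[OF a]) blast
  also have "\<dots> = orb ` (orb a <#> (orb b <#> orb c))"
    by (simp add: image_UN[symmetric] UN_orbit_set_mult(2)[OF inv(2)])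
  finally show "(\<Union>W\<in>orbit_hop G P (orb b) (orb c). orbit_hop G P (orb a) W) = orb ` (orb a <#> (orb b <#> orb c))" .
qed

lemma is_hg_identity_orbit_one: "is_hg_identity (orbits G P) (orbit_hop G P) (orb \<one>)"
  unfolding is_hg_identity_def
proof (intro conjI ballI)
  show "orb \<one> \<in> orbits G P" by (simp add: orbits_def)
  fix X assume "X \<in> orbits G P"
  then obtain b where b: "b \<in> carrier G" "X = orb b" by (rule orbitsE)
  have "{\<one>} <#> orb b = orb b" "orb b <#> {\<one>} = orb b"
    using orbit_subset_carrier[OF b(1)] by (force simp: set_mult_def)+
  then show "orbit_hop G P (orb \<one>) X = {X}" "orbit_hop G P X (orb \<one>) = {X}"
    unfolding b(2) orbit_hop_eq[OF one_closed b(1)] orbit_hop_eq[OF b(1) one_closed]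
    unfolding orbit_one
    using orbit_image_orbit[OF b(1)] by simp_all
qed

lemma hg_id_orbits: "hg_id (orbits G P) (orbit_hop G P) = orb \<one>"
  by (rule hg_id_eqI[OF is_hg_identity_orbit_one])

lemma one_mem_orbit_set_mult_iff:
  assumes x: "x \<in> carrier G" and y: "y \<in> carrier G"
  shows "\<one> \<in> orb x <#> orb y \<longleftrightarrow> orb x = orb (inv y)"
proof
  assume "\<one> \<in> orb x <#> orb y"
  then obtain s t where st: "s \<in> orb x" "t \<in> orb y" "\<one> = s \<otimes> t" by (auto simp: set_mult_def)
  have "s \<in> carrier G" "t \<in> carrier G" using st orbit_subset_carrier x y by blast+
  then have "s = inv t" using st(3) by (simp add: inv_equality)
  then have "s \<in> orb (inv y)" using inv_mem_orbit_inv[OF y st(2)] by simp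
  then show "orb x = orb (inv y)"
    using orbit_eq_iff[OF x \<open>s \<in> carrier G\<close>] orbit_eq_iff[OF inv_closed[OF y] \<open>s \<in> carrier G\<close>] st(1)
    by simp
next
  assume "orb x = orb (inv y)"
  then have "inv y \<in> orb x" using orbit_refl y by simp
  then show "\<one> \<in> orb x <#> orb y" using orbit_refl[OF y] y by (force simp: set_mult_def)
qed

lemma orbit_one_mem_orbit_hop_iff:
  assumes x: "x \<in> carrier G" and y: "y \<in> carrier G"
  shows "orb \<one> \<in> orbit_hop G P (orb x) (orb y) \<longleftrightarrow> orb x = orb (inv y)"
  using orbit_mem_image_iff[OF aut_invariant_set_mult[OF aut_invariant_orbit[OF x] aut_invariant_orbit[OF y]]]
    one_mem_orbit_set_mult_iff[OF x y] orbit_hop_eq[OF x y] by simp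

lemma is_hg_inverse_orbits_iff:
  assumes a: "a \<in> carrier G"
  shows "is_hg_inverse (orbits G P) (orbit_hop G P) (orb a) K \<longleftrightarrow> K = orb (inv a)"
proof
  assume K: "is_hg_inverse (orbits G P) (orbit_hop G P) (orb a) K"
  then obtain d where d: "d \<in> carrier G" "K = orb d" by (auto simp: is_hg_inverse_def elim: orbitsE)
  then show "K = orb (inv a)"
    using K orbit_one_mem_orbit_hop_iff[OF d(1) a] by (simp add: is_hg_inverse_def hg_id_orbits)
next
  assume K: "K = orb (inv a)"
  then have "orb a = orb (inv (inv a))" using a by simp
  with K show "is_hg_inverse (orbits G P) (orbit_hop G P) (orb a) K"
    using a orbit_one_mem_orbit_hop_iff[OF inv_closed[OF a] a] orbit_one_mem_orbit_hop_iff[OF a inv_closed[OF a]]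
    unfolding is_hg_inverse_def hg_id_orbits by (simp add: orbits_def)
qed

lemma hg_inv_orbits:
  "a \<in> carrier G \<Longrightarrow> hg_inv (orbits G P) (orbit_hop G P) (orb a) = orb (inv a)"
  by (rule hg_inv_eqI) (simp_all add: is_hg_inverse_orbits_iff)

lemma set_mult_orbits_reversible:
  assumes a: "a \<in> carrier G" and b: "b \<in> carrier G" and c: "c \<in> orb a <#> orb b"
  shows "b \<in> orb (inv a) <#> orb c" "a \<in> orb c <#> orb (inv b)"
proof -
  obtain s t where st: "s \<in> orb a" "t \<in> orb b" "c = s \<otimes> t" using c by (auto simp: set_mult_def)
  have sG: "s \<in> carrier G" and tG: "t \<in> carrier G" using st orbit_subset_carrier a b by blast+
  have cG: "c \<in> carrier G" using st sG tG by simp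
  have "t = inv s \<otimes> c" "s = c \<otimes> inv t" using st(3) sG tG by (simp_all add: m_assoc[symmetric] m_assoc)
  moreover have "inv s \<in> orb (inv a)" "inv t \<in> orb (inv b)"
    using inv_mem_orbit_inv a b st by blast+
  ultimately have "t \<in> orb (inv a) <#> orb c" "s \<in> orb c <#> orb (inv b)"
    using orbit_refl[OF cG] unfolding set_mult_def by blast+
  moreover have "b \<in> orb t" "a \<in> orb s"
    using orbit_eq_iff[OF tG b] orbit_eq_iff[OF sG a] orbit_eq_iff[OF a sG] orbit_eq_iff[OF b tG]
      st orbit_refl a b by auto
  moreover have "aut_invariant (orb (inv a) <#> orb c)" "aut_invariant (orb c <#> orb (inv b))"
    using aut_invariant_set_mult aut_invariant_orbit a b cG by simp_all
  ultimately show "b \<in> orb (inv a) <#> orb c" "a \<in> orb c <#> orb (inv b)"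
    using orbit_subset_aut_invariant by blast+
qed

theorem hypergroup_orbits: "hypergroup (orbits G P) (orbit_hop G P)"
  unfolding hypergroup_def
proof (intro conjI ballI impI)
  show "orbits G P \<noteq> {}" by (auto simp: orbits_def)
next
  fix X Y assume X: "X \<in> orbits G P" and Y: "Y \<in> orbits G P"
  obtain a where a: "a \<in> carrier G" "X = orb a" using X by (rule orbitsE)
  obtain b where b: "b \<in> carrier G" "Y = orb b" using Y by (rule orbitsE)
  note ab = a(1) b(1) a(2) b(2)
  have "a \<otimes> b \<in> orb a <#> orb b" using orbit_refl ab by (force simp: set_mult_def)
  then show "orbit_hop G P X Y \<noteq> {}" "orbit_hop G P X Y \<subseteq> orbits G P"
    using orbit_hop_eq orbit_hop_subset_orbits ab by auto
next
  fix X Y Z assume X: "X \<in> orbits G P" and Y: "Y \<in> orbits G P" and Z: "Z \<in> orbits G P"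
  obtain a where a: "a \<in> carrier G" "X = orb a" using X by (rule orbitsE)
  obtain b where b: "b \<in> carrier G" "Y = orb b" using Y by (rule orbitsE)
  obtain c where c: "c \<in> carrier G" "Z = orb c" using Z by (rule orbitsE)
  show "(\<Union>W\<in>orbit_hop G P X Y. orbit_hop G P W Z) = (\<Union>W\<in>orbit_hop G P Y Z. orbit_hop G P X W)"
    using UN_orbit_hop[OF a(1) b(1) c(1)] set_mult_assoc[OF orbit_subset_carrier orbit_subset_carrier orbit_subset_carrier]
      a b c by simp
next
  show "\<exists>!E. is_hg_identity (orbits G P) (orbit_hop G P) E"
    using is_hg_identity_unique[OF _ is_hg_identity_orbit_one]
    by (intro ex1I[of _ "orb \<one>"] is_hg_identity_orbit_one)
next
  fix X assume "X \<in> orbits G P"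
  then obtain a where "a \<in> carrier G" "X = orb a" by (rule orbitsE)
  then show "\<exists>!Y. is_hg_inverse (orbits G P) (orbit_hop G P) X Y"
    using is_hg_inverse_orbits_iff by simp
next
  fix X Y Z assume X: "X \<in> orbits G P" and Y: "Y \<in> orbits G P" and "Z \<in> orbits G P"
    and Z: "Z \<in> orbit_hop G P X Y"
  obtain a where a: "a \<in> carrier G" "X = orb a" using X by (rule orbitsE)
  obtain b where b: "b \<in> carrier G" "Y = orb b" using Y by (rule orbitsE)
  obtain c where c: "c \<in> carrier G" "Z = orb c" using \<open>Z \<in> orbits G P\<close> by (rule orbitsE)
  note abc = a(1) b(1) c(1) and XYZ = a(2) b(2) c(2)
  have "c \<in> orb a <#> orb b"
    using Z orbit_mem_image_iff[OF aut_invariant_set_mult[OF aut_invariant_orbit aut_invariant_orbit]]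
      orbit_hop_eq abc XYZ by simp
  then show "Y \<in> orbit_hop G P (hg_inv (orbits G P) (orbit_hop G P) X) Z"
    "X \<in> orbit_hop G P Z (hg_inv (orbits G P) (orbit_hop G P) Y)"
    unfolding XYZ hg_inv_orbits[OF abc(1)] hg_inv_orbits[OF abc(2)]
      orbit_hop_eq[OF inv_closed[OF abc(1)] abc(3)] orbit_hop_eq[OF abc(3) inv_closed[OF abc(2)]]
    using set_mult_orbits_reversible[OF abc(1,2)] by blast+
qed

lemma aut_invariant_apply_iff:
  assumes S: "aut_invariant S" and g: "g \<in> P" and x: "x \<in> carrier G"
  shows "g x \<in> S \<longleftrightarrow> x \<in> S"
proof
  assume "g x \<in> S"
  moreover have "x \<in> orb (g x)" using orbit_apply[OF g x] orbit_refl[OF x] by simp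
  ultimately show "x \<in> S" using orbit_subset_aut_invariant[OF S] by blast
qed (use S g in \<open>simp add: aut_invariant_def\<close>)

lemma right_factors_apply:
  assumes A: "aut_invariant A" and B: "aut_invariant B" and g: "g \<in> P" and d: "d \<in> carrier G"
  shows "right_factors A B (g d) = g ` right_factors A B d"
proof (intro equalityI subsetI)
  fix u assume "u \<in> right_factors A B (g d)"
  then have u: "u \<in> B" "g d \<otimes> inv u \<in> A" by (auto simp: right_factors_def)
  have "u \<in> carrier G" using u(1) B by (auto simp: aut_invariant_def)
  then obtain v where v: "v \<in> carrier G" "u = g v" using P_bij[OF g] by (metis bij_betw_iff_bijections)
  have "g (d \<otimes> inv v) = g d \<otimes> inv u" using v d g by (simp add: P_mult P_inv)
  then have "g (d \<otimes> inv v) \<in> A" using u(2) by simp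
  then have "d \<otimes> inv v \<in> A" using v(1) d aut_invariant_apply_iff[OF A g] by simp
  moreover have "v \<in> B" using u(1) v aut_invariant_apply_iff[OF B g] by simp
  ultimately have "v \<in> right_factors A B d" by (simp add: right_factors_def)
  then show "u \<in> g ` right_factors A B d" using v by blast
next
  fix u assume "u \<in> g ` right_factors A B d"
  then obtain v where v: "v \<in> B" "d \<otimes> inv v \<in> A" "u = g v" by (auto simp: right_factors_def)
  have vG: "v \<in> carrier G" using v(1) B by (auto simp: aut_invariant_def)
  have "g d \<otimes> inv u = g (d \<otimes> inv v)" using v vG d g by (simp add: P_mult P_inv)
  then show "u \<in> right_factors A B (g d)"
    using v vG d aut_invariant_apply_iff[OF A g] aut_invariant_apply_iff[OF B g]
    by (simp add: right_factors_def)
qed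

lemma right_factors_orbit_eqpoll:
  assumes A: "aut_invariant A" and B: "aut_invariant B" and d: "d \<in> carrier G" and d': "d' \<in> orb d"
  shows "right_factors A B d' \<approx> right_factors A B d"
proof -
  obtain g where g: "g \<in> P" "d' = g d" using d' by (rule orbit_memE)
  have "right_factors A B d \<subseteq> carrier G" using B by (auto simp: aut_invariant_def right_factors_def)
  then have "inj_on g (right_factors A B d)" using P_bij[OF g(1)] by (auto simp: bij_betw_def inj_on_def)
  then show ?thesis
    unfolding g(2) right_factors_apply[OF A B g(1) d] by (rule inj_on_image_eqpoll_self)
qed

abbreviation C :: "'a set \<Rightarrow> ('a \<times> 'a) set" where "C \<equiv> orbit_rel G P"

lemma row_inter_eqpoll_right_factors:
  assumes a: "a \<in> carrier G" and b: "b \<in> carrier G" and c: "c \<in> carrier G" and yz: "(y, z) \<in> C (orb c)"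
  shows "row y (C (orb a)) \<inter> row z (converse (C (orb b))) \<approx> right_factors (orb a) (orb b) c"
proof -
  have y: "y \<in> carrier G" and z: "z \<in> carrier G" and "y \<otimes> inv z \<in> orb c"
    using yz by (simp_all add: mem_orbit_rel)
  then show ?thesis
    using row_inter_converse_orbit_rel_eqpoll[OF orbit_subset_carrier[OF b] y z]
      right_factors_orbit_eqpoll[OF aut_invariant_orbit[OF a] aut_invariant_orbit[OF b] c]
    by (blast intro: eqpoll_trans)
qed

lemma partition_schemeE:
  assumes "p \<in> partition_scheme G P" obtains a where "a \<in> carrier G" "p = C (orb a)"
  using assms by (auto simp: partition_scheme_def orbits_def)

lemma orbit_rel_mem_partition_scheme: "a \<in> carrier G \<Longrightarrow> C (orb a) \<in> partition_scheme G P"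
  by (simp add: partition_scheme_def orbits_def)

lemma orbit_rel_self: "a \<in> carrier G \<Longrightarrow> (a, \<one>) \<in> C (orb a)"
  by (simp add: mem_orbit_rel orbit_refl)

lemma orbit_rel_eq_iff:
  assumes a: "a \<in> carrier G" and b: "b \<in> carrier G"
  shows "C (orb a) = C (orb b) \<longleftrightarrow> orb a = orb b"
proof
  assume "C (orb a) = C (orb b)"
  then have "a \<in> orb b" using orbit_rel_self[OF a] a by (auto simp: mem_orbit_rel)
  then show "orb a = orb b" using orbit_eq_iff[OF b a] by simp
qed simp

lemma orbit_rel_disjoint:
  assumes a: "a \<in> carrier G" and b: "b \<in> carrier G" and ne: "C (orb a) \<noteq> C (orb b)"
  shows "C (orb a) \<inter> C (orb b) = {}"
proof (rule ccontr)
  assume "C (orb a) \<inter> C (orb b) \<noteq> {}"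
  then obtain x y where "x \<in> carrier G" "y \<in> carrier G" "x \<otimes> inv y \<in> orb a" "x \<otimes> inv y \<in> orb b"
    by (auto simp: mem_orbit_rel)
  moreover have "x \<otimes> inv y \<in> carrier G" using calculation by simp
  ultimately have "orb a = orb b" using orbit_eq_iff[OF a] orbit_eq_iff[OF b] by blast
  then show False using ne by simp
qed

lemma converse_orbit_rel: assumes a: "a \<in> carrier G" shows "converse (C (orb a)) = C (orb (inv a))"
proof -
  have "inv (x \<otimes> inv y) = y \<otimes> inv x" if "x \<in> carrier G" "y \<in> carrier G" for x y
    using that by (simp add: inv_mult_group)
  then have "x \<otimes> inv y \<in> orb a \<longleftrightarrow> y \<otimes> inv x \<in> orb (inv a)"
    if "x \<in> carrier G" "y \<in> carrier G" for x y
    using that inv_mem_orbit_inv[OF a] inv_mem_orbit_inv[OF inv_closed[OF a]] a by fastforce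
  then show ?thesis by (auto simp: mem_orbit_rel)
qed

lemma orbit_rel_one: "C (orb \<one>) = Id_on (carrier G)"
proof -
  have "x \<otimes> inv y = \<one> \<longleftrightarrow> x = y" if "x \<in> carrier G" "y \<in> carrier G" for x y
    using that inv_solve_right'[of \<one> x y] by auto
  then show ?thesis by (auto simp: mem_orbit_rel orbit_one intro: Id_onI)
qed

theorem association_scheme_partition_scheme: "association_scheme (carrier G) (partition_scheme G P)"
  unfolding association_scheme_def partition_of_def
proof (intro conjI ballI impI)
  show "carrier G \<noteq> {}" by blast
next
  fix p assume "p \<in> partition_scheme G P"
  then show "p \<noteq> {}" using orbit_rel_self by (blast elim: partition_schemeE)
next
  fix p q assume p: "p \<in> partition_scheme G P" and q: "q \<in> partition_scheme G P" and "p \<noteq> q"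
  obtain a where "a \<in> carrier G" "p = C (orb a)" using p by (rule partition_schemeE)
  moreover obtain b where "b \<in> carrier G" "q = C (orb b)" using q by (rule partition_schemeE)
  ultimately show "p \<inter> q = {}" using orbit_rel_disjoint \<open>p \<noteq> q\<close> by simp
next
  show "\<Union> (partition_scheme G P) = carrier G \<times> carrier G"
  proof (intro equalityI subrelI)
    fix x y assume "(x, y) \<in> \<Union> (partition_scheme G P)"
    then show "(x, y) \<in> carrier G \<times> carrier G" by (auto simp: partition_scheme_def orbit_rel_def)
  next
    fix x y assume "(x, y) \<in> carrier G \<times> carrier G"
    then have x: "x \<in> carrier G" and y: "y \<in> carrier G" by simp_all
    then have "(x, y) \<in> C (orb (x \<otimes> inv y))" by (simp add: mem_orbit_rel orbit_refl)
    with orbit_rel_mem_partition_scheme[OF m_closed[OF x inv_closed[OF y]]]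
    show "(x, y) \<in> \<Union> (partition_scheme G P)" by (rule UnionI)
  qed
next
  show "Id_on (carrier G) \<in> partition_scheme G P"
    using orbit_rel_mem_partition_scheme[OF one_closed] by (simp add: orbit_rel_one)
next
  fix p assume "p \<in> partition_scheme G P"
  then obtain a where "a \<in> carrier G" "p = C (orb a)" by (rule partition_schemeE)
  then show "converse p \<in> partition_scheme G P"
    using converse_orbit_rel orbit_rel_mem_partition_scheme by simp
next
  fix p q r assume p: "p \<in> partition_scheme G P" and q: "q \<in> partition_scheme G P"
    and r: "r \<in> partition_scheme G P"
  obtain a where "a \<in> carrier G" "p = C (orb a)" using p by (rule partition_schemeE)
  moreover obtain b where "b \<in> carrier G" "q = C (orb b)" using q by (rule partition_schemeE)
  moreover obtain c where "c \<in> carrier G" "r = C (orb c)" using r by (rule partition_schemeE)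
  ultimately have "\<forall>y\<in>carrier G. \<forall>z\<in>row y r. row y p \<inter> row z (converse q) \<approx> right_factors (orb a) (orb b) c"
    using row_inter_eqpoll_right_factors by (simp add: row_def)
  then show "\<exists>n::'a set. \<forall>y\<in>carrier G. \<forall>z\<in>row y r. row y p \<inter> row z (converse q) \<approx> n" by blast
qed

lemma orbit_rel_mem_scheme_hop_iff:
  assumes a: "a \<in> carrier G" and b: "b \<in> carrier G" and c: "c \<in> carrier G"
  shows "C (orb c) \<in> scheme_hop (carrier G) (partition_scheme G P) (C (orb a)) (C (orb b))
    \<longleftrightarrow> c \<in> orb a <#> orb b"
proof -
  have "row y (C (orb a)) \<inter> row z (converse (C (orb b))) \<noteq> {} \<longleftrightarrow> right_factors (orb a) (orb b) c \<noteq> {}"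
    if "(y, z) \<in> C (orb c)" for y z
    using row_inter_eqpoll_right_factors[OF a b c that] by (metis eqpoll_empty_iff_empty eqpoll_sym)
  moreover have "(c, \<one>) \<in> C (orb c)" and "c \<in> carrier G" using orbit_rel_self c by simp_all
  ultimately have "(\<forall>y\<in>carrier G. \<forall>z\<in>row y (C (orb c)).
      row y (C (orb a)) \<inter> row z (converse (C (orb b))) \<noteq> {}) \<longleftrightarrow> right_factors (orb a) (orb b) c \<noteq> {}"
    by (auto simp: row_def)
  then show ?thesis
    using right_factors_nonempty_iff[OF orbit_subset_carrier[OF a] orbit_subset_carrier[OF b] c]
      orbit_rel_mem_partition_scheme[OF c] by (simp add: scheme_hop_def)
qed

theorem hg_iso_orbit_rel:
  "hg_iso (orbits G P) (orbit_hop G P) (partition_scheme G P)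
     (scheme_hop (carrier G) (partition_scheme G P)) C"
  unfolding hg_iso_def
proof (intro conjI ballI)
  show "bij_betw C (orbits G P) (partition_scheme G P)"
    unfolding bij_betw_def partition_scheme_def
    by (auto simp: inj_on_def orbit_rel_eq_iff elim!: orbitsE)
next
  fix X Y assume X: "X \<in> orbits G P" and Y: "Y \<in> orbits G P"
  obtain a where a: "a \<in> carrier G" "X = orb a" using X by (rule orbitsE)
  obtain b where b: "b \<in> carrier G" "Y = orb b" using Y by (rule orbitsE)
  have inv: "aut_invariant (orb a <#> orb b)"
    using aut_invariant_set_mult aut_invariant_orbit a b by blast
  show "C ` orbit_hop G P X Y = scheme_hop (carrier G) (partition_scheme G P) (C X) (C Y)"
  proof (intro equalityI subsetI)
    fix r assume "r \<in> C ` orbit_hop G P X Y"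
    then obtain c where "c \<in> orb a <#> orb b" "r = C (orb c)"
      unfolding a(2) b(2) orbit_hop_eq[OF a(1) b(1)] by blast
    moreover have "c \<in> carrier G" using calculation inv by (auto simp: aut_invariant_def)
    ultimately show "r \<in> scheme_hop (carrier G) (partition_scheme G P) (C X) (C Y)"
      using orbit_rel_mem_scheme_hop_iff a b by simp
  next
    fix r assume r: "r \<in> scheme_hop (carrier G) (partition_scheme G P) (C X) (C Y)"
    then obtain c where c: "c \<in> carrier G" "r = C (orb c)"
      by (auto simp: scheme_hop_def elim: partition_schemeE)
    then have "c \<in> orb a <#> orb b" using r orbit_rel_mem_scheme_hop_iff a b by simp
    then show "r \<in> C ` orbit_hop G P X Y"
      unfolding a(2) b(2) orbit_hop_eq[OF a(1) b(1)] c(2) by blast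
  qed
qed

end

theorem corollary5p6:
  fixes G :: "('a, 'c) monoid_scheme" and P :: "('a \<Rightarrow> 'a) set"
  assumes "group G"
    and "subgroup P (AutoGroup G)"
  shows "hypergroup (orbits G P) (orbit_hop G P)
    \<and> association_scheme (carrier G) (partition_scheme G P)
    \<and> hypergroup (partition_scheme G P) (scheme_hop (carrier G) (partition_scheme G P))
    \<and> hg_isomorphic (orbits G P) (orbit_hop G P)
         (partition_scheme G P) (scheme_hop (carrier G) (partition_scheme G P))"
proof -
  interpret aut_subgroup G P
    using assms by (rule aut_subgroup.intro[OF _ aut_subgroup_axioms.intro])
  show ?thesis
    using hypergroup_orbits association_scheme_partition_scheme
      hypergroup_hg_iso[OF hypergroup_orbits hg_iso_orbit_rel] hg_iso_orbit_rel
    unfolding hg_isomorphic_def by blast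
qed

end
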